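(* Let $k\ge1$ be an integer, and for a measurable set $R\subseteq[0,b]^k$ define $$I_R(t)=\int_{R}\prod_{i=1}^k g(x_i)\,dx_1\cdots dx_k\int_{0\le s_1\le s_2\le\cdots\le s_k\le t}V_0u_1\cdots u_k\,e^{\lambda_0t}\prod_{j=1}^k e^{x_j(t-s_j)}\,ds_1\cdots ds_k,$$ so that $I_{[0,b]^k}(t)=EZ_k(t)$. Let $b_t=b-(2k+1)(\log t)/t$ and $R_t=\{(x_1,\dots,x_k)\in[0,b]^k: x_i\le b_t\text{ for some }i\}$. If condition $(\ast)$ holds, then $I_{R_t}(t)=o\!\left(t^{-2k}e^{(\lambda_0+kb)t}\right)$ as $t\to\infty$.
   Context: Here $\lambda_0>0$, $V_0>0$, $u_1,\dots,u_k>0$ are constants, and $g$ is a probability density on $[0,\infty)$ (the density of the fitness increment). $Z_k(t)$ is the number of type-$k$ cells at time $t$ in the model where $Z_0(t)=V_0e^{\lambda_0t}$, type-$(j+1)$ cells arise from type-$j$ cells at rate $u_{j+1}$ per cell with birth rate increased by an independent increment of density $g$, and all cells die at rate $b_0=a_0-\lambda_0$; its mean equals $I_{[0,b]^k}(t)$ above. Condition $(\ast)$: for some $b>0$, $g$ vanishes outside $[0,b]$, $g$ is continuous at $b$, $g(b)>0$, and $g\le G$ on $[0,b]$ for some constant $G<\infty$. $f(t)=o(h(t))$ means $f(t)/h(t)\to0$. *)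

theory Defs
  imports "HOL-Probability.Probability" "HOL-Library.Landau_Symbols"
begin

text \<open>Vectors in R^k are functions on the index set {..<k} (coordinate j stands for
  the paper's index j+1), with the product Lebesgue measure.\<close>

abbreviation lebk :: "nat \<Rightarrow> (nat \<Rightarrow> real) measure" where
  "lebk k \<equiv> Pi\<^sub>M {..<k} (\<lambda>_. lborel)"

definition ordered_simplex :: "nat \<Rightarrow> real \<Rightarrow> (nat \<Rightarrow> real) set" where
  "ordered_simplex k t = {s \<in> space (lebk k).
      (\<forall>j<k. 0 \<le> s j \<and> s j \<le> t) \<and> (\<forall>i j. i \<le> j \<longrightarrow> j < k \<longrightarrow> s i \<le> s j)}"

definition time_int ::
  "nat \<Rightarrow> real \<Rightarrow> real \<Rightarrow> (nat \<Rightarrow> real) \<Rightarrow> real \<Rightarrow> (nat \<Rightarrow> real) \<Rightarrow> real" where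
  "time_int k V0 lam0 u t x =
     (LINT s : ordered_simplex k t | lebk k.
        V0 * (\<Prod>i\<in>{1..k}. u i) * exp (lam0 * t) * (\<Prod>j<k. exp (x j * (t - s j))))"

definition I_R ::
  "nat \<Rightarrow> (real \<Rightarrow> real) \<Rightarrow> real \<Rightarrow> real \<Rightarrow> (nat \<Rightarrow> real) \<Rightarrow> (nat \<Rightarrow> real) set \<Rightarrow> real \<Rightarrow> real" where
  "I_R k g V0 lam0 u R t =
     (LINT x : R | lebk k. (\<Prod>i<k. g (x i)) * time_int k V0 lam0 u t x)"

definition R_t :: "nat \<Rightarrow> real \<Rightarrow> real \<Rightarrow> (nat \<Rightarrow> real) set" where
  "R_t k b t = {x \<in> PiE {..<k} (\<lambda>_. {0..b}).
      \<exists>i<k. x i \<le> b - (2 * real k + 1) * ln t / t}"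

text \<open>Condition (*), together with g being a probability density on [0,oo).\<close>
definition cond_star :: "(real \<Rightarrow> real) \<Rightarrow> real \<Rightarrow> real \<Rightarrow> bool" where
  "cond_star g b G \<longleftrightarrow>
     b > 0 \<and> g \<in> borel_measurable borel \<and> (\<forall>x. 0 \<le> g x) \<and>
     (LINT x : {0..} | lborel. g x) = 1 \<and>
     (\<forall>x. x \<notin> {0..b} \<longrightarrow> g x = 0) \<and>
     continuous (at_left b) g \<and> g b > 0 \<and> (\<forall>x\<in>{0..b}. g x \<le> G)"

end

theory Submission imports Defs begin

text \<open>Bound \<open>g\<close> by \<open>G\<close> and the time integral by \<open>t^k e^{\<lambda>\<^sub>0 t} e^{t \<Sum> x\<^sub>j}\<close> (the simplex lies in
  \<open>[0,t]^k\<close> and \<open>e^{x\<^sub>j(t - s\<^sub>j)} \<le> e^{t x\<^sub>j}\<close>). A point of \<open>R_t\<close> lies in one of \<open>k\<close> boxes in which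
  one coordinate ranges only over \<open>[0,b_t]\<close>; integrating \<open>e^{t \<Sum> x\<^sub>j}\<close> over such a box gives at most
  \<open>e^{t((k-1)b + b_t)}/t^k = e^{tkb} t^{-(2k+1)}/t^k\<close>. Altogether
  \<open>|I_{R_t}(t)| \<le> k G^k V\<^sub>0 u\<^sub>1\<cdots>u\<^sub>k e^{(\<lambda>\<^sub>0+kb)t} t^{-2k} / t\<close>.\<close>

lemma abs_integral_le_of_nn_integral_le:
  fixes f :: "'a \<Rightarrow> real"
  assumes "(\<integral>\<^sup>+x. ennreal \<bar>f x\<bar> \<partial>M) \<le> ennreal B" "0 \<le> B"
  shows "\<bar>integral\<^sup>L M f\<bar> \<le> B"
proof (cases "integrable M f")
  case True
  have "ennreal \<bar>integral\<^sup>L M f\<bar> \<le> (\<integral>\<^sup>+x. ennreal \<bar>f x\<bar> \<partial>M)"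
    using integral_norm_bound_ennreal[OF True] by simp
  also have "\<dots> \<le> ennreal B" by (fact assms(1))
  finally show ?thesis using assms(2) by simp
qed (use assms in \<open>simp add: not_integrable_integral_eq\<close>)

lemma nn_integral_exp_interval_le:
  fixes t c :: real assumes "t > 0"
  shows "(\<integral>\<^sup>+y. ennreal (exp (t * y)) * indicator {0..c} y \<partial>lborel) \<le> ennreal (exp (t * c) / t)"
proof (cases "0 \<le> c")
  case True
  have "((\<lambda>y. exp (t * y)) has_integral (exp (t * c) / t - exp (t * 0) / t)) {0..c}"
  proof (rule fundamental_theorem_of_calculus)
    show "((\<lambda>y. exp (t * y) / t) has_vector_derivative exp (t * y)) (at y within {0..c})" for y
      unfolding has_real_derivative_iff_has_vector_derivative [symmetric]
      using assms by (auto intro!: derivative_eq_intros)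
  qed (use True in auto)
  then have "(\<integral>\<^sup>+y. ennreal (exp (t * y)) * indicator {0..c} y \<partial>lborel) = ennreal (exp (t * c) / t - 1 / t)"
    by (subst nn_integral_has_integral_lebesgue') auto
  also have "\<dots> \<le> ennreal (exp (t * c) / t)"
    using assms by (intro ennreal_leI) simp
  finally show ?thesis .
qed (simp add: indicator_def)

lemma nn_integral_exp_sum_PiE_le:
  fixes t :: real and c :: "'i \<Rightarrow> real"
  assumes "t > 0" "finite I"
  shows "(\<integral>\<^sup>+x. ennreal (exp (t * (\<Sum>j\<in>I. x j))) * indicator (PiE I (\<lambda>j. {0..c j})) x
            \<partial>Pi\<^sub>M I (\<lambda>_. lborel))
         \<le> ennreal (exp (t * (\<Sum>j\<in>I. c j)) / t ^ card I)"
proof -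
  interpret product_sigma_finite "\<lambda>_. lborel" by standard
  define f where "f j y = ennreal (exp (t * y)) * indicator {0..c j} y" for j y
  have [measurable]: "f j \<in> borel_measurable lborel" for j
    unfolding f_def by measurable
  have "ennreal (exp (t * (\<Sum>j\<in>I. x j))) * indicator (PiE I (\<lambda>j. {0..c j})) x = (\<Prod>j\<in>I. f j (x j))"
    if "x \<in> space (Pi\<^sub>M I (\<lambda>_. lborel))" for x
  proof -
    have x: "x \<in> PiE I (\<lambda>_. UNIV)" using that by (simp add: space_PiM)
    have "indicator (PiE I (\<lambda>j. {0..c j})) x = (\<Prod>j\<in>I. indicator {0..c j} (x j) :: ennreal)"
    proof (cases "\<forall>j\<in>I. x j \<in> {0..c j}")
      case True
      with x show ?thesis by (simp add: PiE_iff)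
    next
      case False
      then obtain j where j: "j \<in> I" "x j \<notin> {0..c j}" by blast
      then have "(\<Prod>j\<in>I. indicator {0..c j} (x j) :: ennreal) = 0"
        using assms(2) by (intro prod_zero bexI[of _ j]) auto
      with False show ?thesis by (simp add: PiE_iff)
    qed
    moreover have "ennreal (exp (t * (\<Sum>j\<in>I. x j))) = (\<Prod>j\<in>I. ennreal (exp (t * x j)))"
      using assms(2) by (simp add: prod_ennreal exp_sum sum_distrib_left)
    ultimately show ?thesis by (simp add: f_def prod.distrib)
  qed
  then have "(\<integral>\<^sup>+x. ennreal (exp (t * (\<Sum>j\<in>I. x j))) * indicator (PiE I (\<lambda>j. {0..c j})) x
              \<partial>Pi\<^sub>M I (\<lambda>_. lborel)) = (\<integral>\<^sup>+x. (\<Prod>j\<in>I. f j (x j)) \<partial>Pi\<^sub>M I (\<lambda>_. lborel))"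
    by (rule nn_integral_cong)
  also have "\<dots> = (\<Prod>j\<in>I. \<integral>\<^sup>+y. f j y \<partial>lborel)"
    using assms(2) by (rule product_nn_integral_prod) simp
  also have "\<dots> \<le> (\<Prod>j\<in>I. ennreal (exp (t * c j) / t))"
    unfolding f_def by (intro prod_mono_ennreal nn_integral_exp_interval_le assms(1))
  also have "\<dots> = ennreal (exp (t * (\<Sum>j\<in>I. c j)) / t ^ card I)"
    using assms by (simp add: prod_ennreal prod_dividef exp_sum sum_distrib_left)
  finally show ?thesis .
qed

lemma time_int_abs_le:
  fixes t :: real and x :: "nat \<Rightarrow> real"
  assumes t: "t \<ge> 0" and x: "\<And>j. j < k \<Longrightarrow> 0 \<le> x j"
  shows "\<bar>time_int k V0 lam0 u t x\<bar>
     \<le> \<bar>V0 * (\<Prod>i\<in>{1..k}. u i)\<bar> * exp (lam0 * t) * exp (t * (\<Sum>j<k. x j)) * t ^ k"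
proof -
  interpret product_sigma_finite "\<lambda>_. lborel" by standard
  define E where "E = \<bar>V0 * (\<Prod>i\<in>{1..k}. u i)\<bar> * exp (lam0 * t) * exp (t * (\<Sum>j<k. x j))"
  define F where "F s = V0 * (\<Prod>i\<in>{1..k}. u i) * exp (lam0 * t) * (\<Prod>j<k. exp (x j * (t - s j)))"
    for s :: "nat \<Rightarrow> real"
  let ?box = "PiE {..<k} (\<lambda>_. {0..t})"
  have E0: "0 \<le> E" unfolding E_def by simp
  have "ennreal \<bar>indicator (ordered_simplex k t) s *\<^sub>R F s\<bar> \<le> ennreal E * indicator ?box s"
    if "s \<in> space (lebk k)" for s
  proof (cases "s \<in> ordered_simplex k t")
    case True
    then have s: "\<And>j. j < k \<Longrightarrow> 0 \<le> s j \<and> s j \<le> t" unfolding ordered_simplex_def by auto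
    with that have "s \<in> ?box" by (auto simp: space_PiM PiE_iff)
    have "(\<Prod>j<k. exp (x j * (t - s j))) \<le> (\<Prod>j<k. exp (t * x j))"
      by (rule prod_mono) (use x s in \<open>auto simp: mult_left_mono algebra_simps\<close>)
    also have "\<dots> = exp (t * (\<Sum>j<k. x j))" by (simp add: exp_sum sum_distrib_left)
    finally have "\<bar>F s\<bar> \<le> E"
      unfolding F_def E_def by (simp add: abs_mult prod_nonneg mult_left_mono)
    then show ?thesis using True \<open>s \<in> ?box\<close> by (simp add: ennreal_leI)
  qed simp
  then have "(\<integral>\<^sup>+s. ennreal \<bar>indicator (ordered_simplex k t) s *\<^sub>R F s\<bar> \<partial>lebk k)
      \<le> (\<integral>\<^sup>+s. ennreal E * indicator ?box s \<partial>lebk k)"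
    by (rule nn_integral_mono)
  also have "\<dots> = ennreal E * emeasure (lebk k) ?box"
    by (simp add: nn_integral_cmult_indicator)
  also have "emeasure (lebk k) ?box = (\<Prod>j<k. emeasure lborel {0..t})"
    by (simp add: emeasure_PiM)
  also have "ennreal E * (\<Prod>j<k. emeasure lborel {0..t}) = ennreal (E * t ^ k)"
    using t E0 by (simp add: ennreal_power ennreal_mult)
  finally show ?thesis
    unfolding time_int_def set_lebesgue_integral_def F_def E_def
    by (rule abs_integral_le_of_nn_integral_le) (use E0 t in \<open>simp add: E_def\<close>)
qed

lemma cond_star_bound_nonneg:
  assumes "cond_star g b G"
  shows "0 \<le> G"
proof -
  have "0 < g b" "g b \<le> G" using assms unfolding cond_star_def by auto
  then show ?thesis by simp
qed

lemma integrand_abs_le: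
  assumes t: "t \<ge> 0" and g: "cond_star g b G" and x: "x \<in> PiE {..<k} (\<lambda>_. {0..b})"
  shows "\<bar>(\<Prod>i<k. g (x i)) * time_int k V0 lam0 u t x\<bar>
     \<le> G ^ k * \<bar>V0 * (\<Prod>i\<in>{1..k}. u i)\<bar> * exp (lam0 * t) * t ^ k * exp (t * (\<Sum>j<k. x j))"
proof -
  have xb: "\<And>j. j < k \<Longrightarrow> 0 \<le> x j \<and> x j \<le> b" using x by (auto simp: PiE_iff)
  have g0: "\<And>y. 0 \<le> g y" and gG: "\<And>y. y \<in> {0..b} \<Longrightarrow> g y \<le> G"
    using g unfolding cond_star_def by auto
  have G0: "0 \<le> G" using g by (rule cond_star_bound_nonneg)
  have "\<bar>\<Prod>i<k. g (x i)\<bar> \<le> G ^ k"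
    using prod_mono[of "{..<k}" "\<lambda>i. g (x i)" "\<lambda>_. G"] xb g0 gG by (simp add: abs_prod)
  moreover have "\<bar>time_int k V0 lam0 u t x\<bar>
      \<le> \<bar>V0 * (\<Prod>i\<in>{1..k}. u i)\<bar> * exp (lam0 * t) * exp (t * (\<Sum>j<k. x j)) * t ^ k"
    using t xb by (intro time_int_abs_le) auto
  ultimately have "\<bar>(\<Prod>i<k. g (x i)) * time_int k V0 lam0 u t x\<bar>
      \<le> G ^ k * (\<bar>V0 * (\<Prod>i\<in>{1..k}. u i)\<bar> * exp (lam0 * t) * exp (t * (\<Sum>j<k. x j)) * t ^ k)"
    unfolding abs_mult using G0 by (intro mult_mono) auto
  then show ?thesis by (simp add: ac_simps)
qed

definition R_t_box :: "nat \<Rightarrow> real \<Rightarrow> real \<Rightarrow> nat \<Rightarrow> (nat \<Rightarrow> real) set" where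
  "R_t_box k b t i = PiE {..<k} (\<lambda>j. {0..if j = i then b - (2 * real k + 1) * ln t / t else b})"

lemma R_t_subset_UN_R_t_box: "R_t k b t \<subseteq> (\<Union>i<k. R_t_box k b t i)"
  unfolding R_t_def R_t_box_def by (force simp: PiE_iff)

lemma nn_integral_exp_sum_R_t_box_le:
  assumes t: "t > 0" and i: "i < k"
  shows "(\<integral>\<^sup>+x. ennreal (exp (t * (\<Sum>j<k. x j))) * indicator (R_t_box k b t i) x \<partial>lebk k)
    \<le> ennreal (exp (t * (real k * b)) * t powr (- (2 * real k + 1)) / t ^ k)"
proof -
  define bt where "bt = b - (2 * real k + 1) * ln t / t"
  have "(\<Sum>j<k. if j = i then bt else b) = (\<Sum>j<k. b + (if j = i then bt - b else 0))"
    by (rule sum.cong) auto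
  also have "\<dots> = real k * b + (bt - b)"
    using i by (simp add: sum.distrib)
  finally have sum: "(\<Sum>j<k. if j = i then bt else b) = real k * b + (bt - b)" .
  have "t * (real k * b + (bt - b)) = t * (real k * b) + (- (2 * real k + 1)) * ln t"
    using t unfolding bt_def by (simp add: field_simps)
  then have bound: "exp (t * (\<Sum>j<k. if j = i then bt else b)) / t ^ card {..<k}
      = exp (t * (real k * b)) * t powr (- (2 * real k + 1)) / t ^ k"
    using t by (simp add: sum exp_add powr_def)
  have box: "R_t_box k b t i = PiE {..<k} (\<lambda>j. {0..if j = i then bt else b})"
    unfolding R_t_box_def bt_def ..
  show ?thesis
    unfolding box bound[symmetric] by (rule nn_integral_exp_sum_PiE_le[OF t]) simp
qed

lemma I_R_R_t_abs_le:
  assumes t: "t > 0" and g: "cond_star g b G"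
  shows "\<bar>I_R k g V0 lam0 u (R_t k b t) t\<bar>
     \<le> real k * G ^ k * \<bar>V0 * (\<Prod>i\<in>{1..k}. u i)\<bar> / t
         * (t powr (- 2 * real k) * exp ((lam0 + real k * b) * t))"
proof -
  define c where "c = G ^ k * \<bar>V0 * (\<Prod>i\<in>{1..k}. u i)\<bar> * exp (lam0 * t) * t ^ k"
  define V where "V = exp (t * (real k * b)) * t powr (- (2 * real k + 1)) / t ^ k"
  let ?F = "\<lambda>x. (\<Prod>i<k. g (x i)) * time_int k V0 lam0 u t x"
  have G0: "0 \<le> G" using g by (rule cond_star_bound_nonneg)
  have c0: "0 \<le> c" and V0': "0 \<le> V" using G0 t by (simp_all add: c_def V_def)
  have pointwise: "ennreal \<bar>indicator (R_t k b t) x *\<^sub>R ?F x\<bar>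
      \<le> ennreal c * (\<Sum>i<k. ennreal (exp (t * (\<Sum>j<k. x j))) * indicator (R_t_box k b t i) x)" for x
  proof (cases "x \<in> R_t k b t")
    case True
    then obtain i where i: "i < k" "x \<in> R_t_box k b t i"
      using R_t_subset_UN_R_t_box by blast
    have "\<bar>?F x\<bar> \<le> c * exp (t * (\<Sum>j<k. x j))"
      using integrand_abs_le[OF _ g, of t x] True t unfolding R_t_def c_def by auto
    then have "ennreal \<bar>indicator (R_t k b t) x *\<^sub>R ?F x\<bar> \<le> ennreal c * ennreal (exp (t * (\<Sum>j<k. x j)))"
      using True c0 by (simp add: ennreal_leI ennreal_mult[symmetric])
    also have "\<dots> \<le> ennreal c * (\<Sum>i<k. ennreal (exp (t * (\<Sum>j<k. x j))) * indicator (R_t_box k b t i) x)"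
      using i member_le_sum[of i "{..<k}" "\<lambda>i. ennreal (exp (t * (\<Sum>j<k. x j))) * indicator (R_t_box k b t i) x"]
      by (intro mult_left_mono) auto
    finally show ?thesis .
  qed simp
  have box_meas: "(\<lambda>x. ennreal (exp (t * (\<Sum>j<k. x j))) * indicator (R_t_box k b t i) x) \<in> borel_measurable (lebk k)"
    for i unfolding R_t_box_def by measurable
  have "(\<integral>\<^sup>+x. ennreal \<bar>indicator (R_t k b t) x *\<^sub>R ?F x\<bar> \<partial>lebk k)
      \<le> (\<integral>\<^sup>+x. ennreal c * (\<Sum>i<k. ennreal (exp (t * (\<Sum>j<k. x j))) * indicator (R_t_box k b t i) x) \<partial>lebk k)"
    by (intro nn_integral_mono pointwise)
  also have "\<dots> = ennreal c * (\<integral>\<^sup>+x. (\<Sum>i<k. ennreal (exp (t * (\<Sum>j<k. x j))) * indicator (R_t_box k b t i) x) \<partial>lebk k)"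
    by (intro nn_integral_cmult borel_measurable_sum box_meas)
  also have "(\<integral>\<^sup>+x. (\<Sum>i<k. ennreal (exp (t * (\<Sum>j<k. x j))) * indicator (R_t_box k b t i) x) \<partial>lebk k)
      = (\<Sum>i<k. \<integral>\<^sup>+x. ennreal (exp (t * (\<Sum>j<k. x j))) * indicator (R_t_box k b t i) x \<partial>lebk k)"
    by (intro nn_integral_sum box_meas)
  also have "ennreal c * (\<Sum>i<k. \<integral>\<^sup>+x. ennreal (exp (t * (\<Sum>j<k. x j))) * indicator (R_t_box k b t i) x \<partial>lebk k)
      \<le> ennreal c * (\<Sum>i<k. ennreal V)"
    using nn_integral_exp_sum_R_t_box_le[OF t] unfolding V_def by (intro mult_left_mono sum_mono) auto
  also have "\<dots> = ennreal (c * (real k * V))"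
    using c0 V0' by (simp add: ennreal_mult ennreal_of_nat_eq_real_of_nat)
  finally have "\<bar>I_R k g V0 lam0 u (R_t k b t) t\<bar> \<le> c * (real k * V)"
    unfolding I_R_def set_lebesgue_integral_def
    by (rule abs_integral_le_of_nn_integral_le) (use c0 V0' in simp)
  also have "c * (real k * V) = real k * G ^ k * \<bar>V0 * (\<Prod>i\<in>{1..k}. u i)\<bar> / t
      * (t powr (- 2 * real k) * exp ((lam0 + real k * b) * t))"
  proof -
    have "t powr (- (2 * real k + 1)) = t powr (- 2 * real k) / t"
      using t by (simp add: powr_add powr_minus_divide powr_diff algebra_simps)
    moreover have "exp ((lam0 + real k * b) * t) = exp (lam0 * t) * exp (t * (real k * b))"
      by (simp add: exp_add[symmetric] algebra_simps)
    ultimately show ?thesis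
      using t by (simp add: c_def V_def field_simps)
  qed
  finally show ?thesis .
qed

theorem lemma3:
  fixes k :: nat and g :: "real \<Rightarrow> real" and b G V0 lam0 :: real and u :: "nat \<Rightarrow> real"
  assumes "k \<ge> 1" and "lam0 > 0" and "V0 > 0" and "\<forall>i\<in>{1..k}. u i > 0"
    and "cond_star g b G"
  shows "(\<lambda>t. I_R k g V0 lam0 u (R_t k b t) t)
           \<in> o[at_top](\<lambda>t. t powr (- 2 * real k) * exp ((lam0 + real k * b) * t))"
proof (rule smalloI_tendsto)
  let ?D = "real k * G ^ k * \<bar>V0 * (\<Prod>i\<in>{1..k}. u i)\<bar>"
  let ?h = "\<lambda>t. t powr (- 2 * real k) * exp ((lam0 + real k * b) * t)"
  show "\<forall>\<^sub>F t in at_top. ?h t \<noteq> 0"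
    using eventually_gt_at_top[of 0] by eventually_elim simp
  show "((\<lambda>t. I_R k g V0 lam0 u (R_t k b t) t / ?h t) \<longlongrightarrow> 0) at_top"
  proof (rule Lim_null_comparison)
    show "\<forall>\<^sub>F t in at_top. norm (I_R k g V0 lam0 u (R_t k b t) t / ?h t) \<le> ?D / t"
      using eventually_gt_at_top[of 0]
    proof eventually_elim
      case (elim t)
      then show ?case
        using I_R_R_t_abs_le[OF elim assms(5), of k V0 lam0 u]
        by (simp add: divide_le_eq abs_divide)
    qed
    show "((\<lambda>t. ?D / t) \<longlongrightarrow> 0) at_top"
      by (intro tendsto_divide_0[OF tendsto_const] filterlim_at_top_imp_at_infinity filterlim_ident)
  qed
qed

end
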